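(* Let $1\le b<\frac{n}{2}-1$, and let $T$ be a tree attaining the maximum value of $M_1$ over $\mathcal{CT}^*_{n,b}$, or a tree attaining the maximum value of $M_2$ over $\mathcal{CT}^*_{n,b}$. Then $T$ has a vertex of degree $2$ (i.e. $n_2>0$) if and only if $b<\frac{n-2}{3}$.
   Context: A chemical tree is a tree with maximum degree at most $4$. A branching vertex is a vertex of degree greater than $2$. $\mathcal{CT}^*_{n,b}$ is the class of all $n$-vertex chemical trees with exactly $b$ branching vertices. $n_2$ denotes the number of vertices of degree $2$. $M_1(G)=\sum_v d_v^2$ and $M_2(G)=\sum_{uv\in E(G)}d_ud_v$, where $d_v$ is the degree of $v$. *)

theory Defs
  imports Complex_Main
begin

text \<open>Graphs on the labelled vertex set {0..<n}; edges are 2-element sets of vertices.\<close>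

definition deg :: "nat set set \<Rightarrow> nat \<Rightarrow> nat" where
  "deg E v = card {u. {u, v} \<in> E}"

definition is_tree :: "nat \<Rightarrow> nat set set \<Rightarrow> bool" where
  "is_tree n E \<longleftrightarrow> n \<ge> 1
     \<and> E \<subseteq> {{u, v} | u v. u < n \<and> v < n \<and> u \<noteq> v}
     \<and> (\<forall>u<n. \<forall>v<n. (u, v) \<in> {(x, y). {x, y} \<in> E}\<^sup>*)
     \<and> card E = n - 1"

definition chemical_tree :: "nat \<Rightarrow> nat set set \<Rightarrow> bool" where
  "chemical_tree n E \<longleftrightarrow> is_tree n E \<and> (\<forall>v<n. deg E v \<le> 4)"

definition num_branching :: "nat \<Rightarrow> nat set set \<Rightarrow> nat" where
  "num_branching n E = card {v. v < n \<and> deg E v > 2}"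

definition n2 :: "nat \<Rightarrow> nat set set \<Rightarrow> nat" where
  "n2 n E = card {v. v < n \<and> deg E v = 2}"

definition CT_star :: "nat \<Rightarrow> nat \<Rightarrow> nat set set set" where
  "CT_star n b = {E. chemical_tree n E \<and> num_branching n E = b}"

definition M1 :: "nat \<Rightarrow> nat set set \<Rightarrow> nat" where
  "M1 n E = (\<Sum>v<n. (deg E v)^2)"

definition M2 :: "nat set set \<Rightarrow> nat" where
  "M2 E = (\<Sum>e\<in>E. \<Prod>v\<in>e. deg E v)"

end

theory Submission
  imports Defs
begin

text \<open>
  Counting degrees in a chemical tree with \<open>n \<ge> 2\<close> vertices (all degrees lie in 1..4, and
  they sum to \<open>2(n - 1)\<close>) gives \<open>n\<^sub>2 = n - 2 - 3b + n\<^sub>3\<close>, where \<open>n\<^sub>3\<close> is the number of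
  vertices of degree 3. Hence \<open>3b + 2 < n\<close> forces \<open>n\<^sub>2 > 0\<close>, and conversely, if
  \<open>n\<^sub>2 > 0\<close> but \<open>3b + 2 \<ge> n\<close>, there are vertices \<open>v\<close> of degree 2 and \<open>w\<close> of degree 3.
  Then the tree is not extremal: if \<open>a, c\<close> are the neighbours of \<open>v\<close>, replacing the edges
  \<open>va, vc\<close> by \<open>ac, vw\<close> yields a chemical tree with the same branching vertices
  (\<open>v\<close> becomes a leaf, \<open>w\<close> gets degree 4) and strictly larger \<open>M\<^sub>1\<close> and \<open>M\<^sub>2\<close>.
  The hypotheses \<open>b \<ge> 1\<close> and \<open>b < n/2 - 1\<close> are only used to ensure \<open>n \<ge> 2\<close>.
\<close>

abbreviation simple_graph :: "nat \<Rightarrow> nat set set \<Rightarrow> bool" where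
  "simple_graph n E \<equiv> E \<subseteq> {{u, v} | u v. u < n \<and> v < n \<and> u \<noteq> v}"

definition adj :: "nat set set \<Rightarrow> (nat \<times> nat) set" where
  "adj E = {(x, y). {x, y} \<in> E}"

lemma adj_iff [simp]: "(x, y) \<in> adj E \<longleftrightarrow> {x, y} \<in> E"
  by (simp add: adj_def)

lemma sym_adj: "sym (adj E)"
  by (auto intro: symI simp: insert_commute)

lemma adj_rtrancl_sym: "(x, y) \<in> (adj E)\<^sup>* \<Longrightarrow> (y, x) \<in> (adj E)\<^sup>*"
  by (rule symD[OF sym_rtrancl[OF sym_adj]])

definition neighbors :: "nat set set \<Rightarrow> nat \<Rightarrow> nat set" where
  "neighbors E x = {u. {u, x} \<in> E}"

lemma neighbors_iff: "u \<in> neighbors E x \<longleftrightarrow> {x, u} \<in> E"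
  by (simp add: neighbors_def insert_commute)

lemma deg_eq_card_neighbors: "deg E x = card (neighbors E x)"
  by (simp add: deg_def neighbors_def)

lemma simple_graph_edgeD:
  assumes "simple_graph n E" "{x, y} \<in> E"
  shows "x < n" "y < n" "x \<noteq> y"
proof -
  obtain p q where "{x, y} = {p, q}" "p < n" "q < n" "p \<noteq> q" using assms by blast
  then show "x < n" "y < n" "x \<noteq> y" by (auto simp: doubleton_eq_iff)
qed

lemma finite_simple_graph: "simple_graph n E \<Longrightarrow> finite E"
  by (rule finite_subset[of _ "Pow {..<n}"]) auto

lemma neighbors_subset: "simple_graph n E \<Longrightarrow> neighbors E x \<subseteq> {..<n} - {x}"
  by (auto simp: neighbors_iff dest: simple_graph_edgeD)

lemma finite_neighbors: "simple_graph n E \<Longrightarrow> finite (neighbors E x)"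
  by (rule finite_subset[OF neighbors_subset]) auto

lemma deg_eq_card_incident_edges:
  assumes "simple_graph n E"
  shows "deg E x = card {e \<in> E. x \<in> e}"
proof -
  have "bij_betw (\<lambda>u. {x, u}) (neighbors E x) {e \<in> E. x \<in> e}"
  proof (rule bij_betwI')
    fix e assume "e \<in> {e \<in> E. x \<in> e}"
    then obtain u where "e = {x, u}" using assms by blast
    then show "\<exists>u\<in>neighbors E x. e = {x, u}" using \<open>e \<in> _\<close> by (auto simp: neighbors_iff)
  qed (auto simp: neighbors_iff doubleton_eq_iff)
  then show ?thesis by (simp add: deg_eq_card_neighbors bij_betw_same_card)
qed

lemma sum_deg_eq_twice_card_edges:
  assumes "simple_graph n E"
  shows "(\<Sum>x<n. deg E x) = 2 * card E"
proof -
  have fin: "finite E" using finite_simple_graph[OF assms] .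
  have "(\<Sum>x<n. deg E x) = (\<Sum>x<n. \<Sum>e\<in>E. of_bool (x \<in> e))"
    using fin by (simp add: deg_eq_card_incident_edges[OF assms] Int_def)
  also have "\<dots> = (\<Sum>e\<in>E. \<Sum>x<n. of_bool (x \<in> e))" by (rule sum.swap)
  also have "\<dots> = (\<Sum>e\<in>E. 2)"
  proof (rule sum.cong)
    fix e assume "e \<in> E"
    then obtain p q where "e = {p, q}" "p < n" "q < n" "p \<noteq> q" using assms by blast
    then have "{..<n} \<inter> {x. x \<in> e} = {p, q}" by auto
    then show "(\<Sum>x<n. of_bool (x \<in> e)) = (2::nat)" using \<open>p \<noteq> q\<close> by simp
  qed simp
  finally show ?thesis by simp
qed

definition component :: "nat set set \<Rightarrow> nat \<Rightarrow> nat set" where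
  "component E z = (adj E)\<^sup>* `` {z}"

lemma component_eq:
  assumes "t \<in> component F z" shows "component F t = component F z"
proof -
  have zt: "(z, t) \<in> (adj F)\<^sup>*" using assms by (simp add: component_def)
  then have "(t, z) \<in> (adj F)\<^sup>*" by (rule adj_rtrancl_sym)
  with zt show ?thesis unfolding component_def by (auto intro: rtrancl_trans)
qed

lemma component_insert_edge:
  assumes "x \<notin> component F z" "y \<notin> component F z"
  shows "component (insert {x, y} F) z = component F z"
proof
  show "component F z \<subseteq> component (insert {x, y} F) z"
    unfolding component_def adj_def by (auto elim: rtrancl_mono[THEN subsetD, rotated])
  show "component (insert {x, y} F) z \<subseteq> component F z"
  proof
    fix t assume "t \<in> component (insert {x, y} F) z"
    then have "(z, t) \<in> (adj (insert {x, y} F))\<^sup>*" by (simp add: component_def)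
    then show "t \<in> component F z"
    proof (induction rule: rtrancl_induct)
      case base then show ?case by (simp add: component_def)
    next
      case (step s t)
      then have "{s, t} \<in> insert {x, y} F" "s \<noteq> x" "s \<noteq> y" using assms by auto
      then have "{s, t} \<in> F" by (auto simp: doubleton_eq_iff)
      then show ?case using step(3) by (auto simp: component_def intro: rtrancl_into_rtrancl)
    qed
  qed
qed

text \<open>Adding an edge merges at most two components into one.\<close>

lemma card_le_card_edges_plus_card_components:
  assumes "finite F" "finite A" "\<forall>e\<in>F. \<exists>x y. e = {x, y} \<and> x \<in> A \<and> y \<in> A"
  shows "card A \<le> card F + card (component F ` A)"
  using assms(1,3)
proof (induction F rule: finite_induct)
  case empty
  have "component {} ` A = (\<lambda>z. {z}) ` A" by (auto simp: component_def adj_def)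
  moreover have "card ((\<lambda>z. {z}) ` A) = card A" by (rule card_image) (auto simp: inj_on_def)
  ultimately show ?case by simp
next
  case (insert e F)
  then obtain x y where e: "e = {x, y}" "x \<in> A" "y \<in> A" by blast
  let ?C = "component F" and ?C' = "component (insert e F)"
  define B where "B = {S \<in> ?C' ` A. x \<notin> S \<and> y \<notin> S}"
  have fB: "finite B" unfolding B_def using assms(2) by auto
  have "?C ` A \<subseteq> {?C x, ?C y} \<union> B"
  proof
    fix S assume "S \<in> ?C ` A"
    then obtain z where z: "z \<in> A" "S = ?C z" by blast
    show "S \<in> {?C x, ?C y} \<union> B"
    proof (cases "x \<in> ?C z \<or> y \<in> ?C z")
      case True then show ?thesis using component_eq z by auto
    next
      case False
      then have "?C' z = ?C z" using component_insert_edge e by auto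
      then show ?thesis using False z unfolding B_def by auto
    qed
  qed
  moreover have two: "card {?C x, ?C y} \<le> 2" by (cases "?C x = ?C y") auto
  ultimately have "card (?C ` A) \<le> card ({?C x, ?C y} \<union> B)"
    using fB by (intro card_mono) auto
  also have "\<dots> \<le> 2 + card B"
    using card_Un_le[of "{?C x, ?C y}" B] two by linarith
  also have "\<dots> = card (insert (?C' x) B) + 1"
    using fB unfolding B_def by (simp add: component_def)
  also have "card (insert (?C' x) B) \<le> card (?C' ` A)"
    using e assms(2) unfolding B_def by (intro card_mono) auto
  finally have "card (?C ` A) \<le> card (?C' ` A) + 1" by simp
  moreover have "card A \<le> card F + card (?C ` A)" using insert by auto
  ultimately show ?case using insert by simp
qed

lemma connected_card_edges:
  assumes G: "simple_graph n E" and n: "n \<ge> 1"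
    and conn: "\<forall>u<n. \<forall>v<n. (u, v) \<in> (adj E)\<^sup>*"
  shows "n \<le> card E + 1"
proof -
  have "component E z = component E 0" if "z < n" for z
    using conn that n by (intro component_eq) (simp add: component_def)
  then have "component E ` {..<n} = (\<lambda>_. component E 0) ` {..<n}"
    by (rule image_cong[OF refl]) simp
  also have "\<dots> = {component E 0}" using n by (intro image_constant[of 0]) simp
  finally have "component E ` {..<n} = {component E 0}" .
  moreover have "\<forall>e\<in>E. \<exists>x y. e = {x, y} \<and> x \<in> {..<n} \<and> y \<in> {..<n}"
  proof
    fix e assume "e \<in> E"
    then obtain x y where "e = {x, y}" "x < n" "y < n" using G by blast
    then show "\<exists>x y. e = {x, y} \<and> x \<in> {..<n} \<and> y \<in> {..<n}" by blast
  qed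
  then have "card {..<n} \<le> card E + card (component E ` {..<n})"
    using finite_simple_graph[OF G] by (intro card_le_card_edges_plus_card_components) auto
  ultimately show ?thesis by simp
qed

lemma is_treeD:
  assumes "is_tree n E"
  shows "simple_graph n E" "finite E" "n \<ge> 1" "\<forall>u<n. \<forall>v<n. (u, v) \<in> (adj E)\<^sup>*"
    "card E = n - 1"
  using assms finite_simple_graph unfolding is_tree_def adj_def by blast+

lemma tree_edge_is_bridge:
  assumes T: "is_tree n E" and e: "{x, y} \<in> E"
  shows "(x, y) \<notin> (adj (E - {{x, y}}))\<^sup>*"
proof
  let ?E0 = "E - {{x, y}}"
  assume path: "(x, y) \<in> (adj ?E0)\<^sup>*"
  have "adj E \<subseteq> (adj ?E0)\<^sup>*"
  proof (rule subrelI)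
    fix p q assume pq: "(p, q) \<in> adj E"
    show "(p, q) \<in> (adj ?E0)\<^sup>*"
    proof (cases "{p, q} = {x, y}")
      case True
      then have "(p, q) = (x, y) \<or> (p, q) = (y, x)" by (auto simp: doubleton_eq_iff)
      then show ?thesis using path adj_rtrancl_sym by blast
    next
      case False
      then show ?thesis using pq by (intro r_into_rtrancl) simp
    qed
  qed
  then have "(adj E)\<^sup>* \<subseteq> (adj ?E0)\<^sup>*" by (rule rtrancl_subset_rtrancl)
  then have "\<forall>u<n. \<forall>v<n. (u, v) \<in> (adj ?E0)\<^sup>*" using is_treeD(4)[OF T] by blast
  moreover have "simple_graph n ?E0" using Diff_subset is_treeD(1)[OF T] by (rule order_trans)
  ultimately have "n \<le> card ?E0 + 1" using is_treeD(3)[OF T] by (intro connected_card_edges)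
  moreover have "card ?E0 = card E - 1" using e is_treeD(2)[OF T] by simp
  moreover have "card E \<noteq> 0" using e is_treeD(2)[OF T] by auto
  ultimately show False using is_treeD(5)[OF T] by simp
qed

lemma tree_no_triangle:
  assumes T: "is_tree n E" and va: "{v, a} \<in> E" and vc: "{v, c} \<in> E" and "a \<noteq> c"
  shows "{a, c} \<notin> E"
proof
  assume ac: "{a, c} \<in> E"
  have "v \<noteq> c" using simple_graph_edgeD(3)[OF is_treeD(1)[OF T] vc] .
  have "{v, c} \<in> E - {{v, a}}" using vc \<open>a \<noteq> c\<close> by (auto simp: doubleton_eq_iff)
  moreover have "{c, a} \<in> E - {{v, a}}"
    using ac \<open>v \<noteq> c\<close> by (auto simp: doubleton_eq_iff insert_commute)
  ultimately have "(v, c) \<in> adj (E - {{v, a}})" "(c, a) \<in> adj (E - {{v, a}})" by simp_all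
  then have "(v, a) \<in> (adj (E - {{v, a}}))\<^sup>*" by (meson r_into_rtrancl rtrancl_trans)
  with tree_edge_is_bridge[OF T va] show False by contradiction
qed

lemma tree_deg_pos:
  assumes T: "is_tree n E" and "n \<ge> 2" "x < n"
  shows "deg E x \<ge> 1"
proof -
  define u where "u = (if x = 0 then 1 else 0::nat)"
  have u: "u < n" "u \<noteq> x" using assms(2,3) unfolding u_def by auto
  then have "(x, u) \<in> (adj E)\<^sup>*" using is_treeD(4)[OF T] \<open>x < n\<close> by blast
  then obtain y where "(x, y) \<in> adj E" using u(2) by (cases rule: converse_rtranclE) auto
  then have "neighbors E x \<noteq> {}" by (auto simp: neighbors_iff)
  then show ?thesis
    using finite_neighbors[OF is_treeD(1)[OF T]]
    by (simp add: deg_eq_card_neighbors Suc_leI card_gt_0_iff)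
qed

lemma chemical_tree_degree_count:
  assumes CT: "chemical_tree n E" and n: "n \<ge> 2"
  shows "n + n2 n E + 3 * num_branching n E = 2 * (n - 1) + card {x. x < n \<and> deg E x = 3}"
proof -
  have T: "is_tree n E" and le4: "\<forall>x<n. deg E x \<le> 4"
    using CT unfolding chemical_tree_def by auto
  have card_filter: "(\<Sum>x<n. of_bool (P x)) = card {x. x < n \<and> P x}" for P
    by (simp add: Int_def)
  have "deg E x + of_bool (deg E x = 3) = 1 + of_bool (deg E x = 2) + 3 * of_bool (deg E x > 2)"
    if "x < n" for x
    using tree_deg_pos[OF T n that] le4 that
    by (cases "deg E x") (auto simp: numeral_eq_Suc le_Suc_eq)
  then have "(\<Sum>x<n. deg E x + of_bool (deg E x = 3))
      = (\<Sum>x<n. 1 + of_bool (deg E x = 2) + 3 * of_bool (deg E x > 2))"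
    by (intro sum.cong) auto
  then show ?thesis
    using sum_deg_eq_twice_card_edges[OF is_treeD(1)[OF T]] is_treeD(5)[OF T]
    by (simp add: sum.distrib sum_Suc card_filter sum_distrib_left[symmetric] n2_def
        num_branching_def)
qed

definition reattach :: "nat set set \<Rightarrow> nat \<Rightarrow> nat \<Rightarrow> nat \<Rightarrow> nat \<Rightarrow> nat set set" where
  "reattach E v a c w = insert {v, w} (insert {a, c} (E - {{v, a}, {v, c}}))"

definition edge_weight :: "nat set set \<Rightarrow> nat set \<Rightarrow> nat" where
  "edge_weight E e = (\<Prod>x\<in>e. deg E x)"

lemma M2_eq_sum_edge_weight: "M2 E = sum (edge_weight E) E"
  by (simp add: M2_def edge_weight_def)

lemma edge_weight_doubleton: "x \<noteq> y \<Longrightarrow> edge_weight E {x, y} = deg E x * deg E y"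
  by (simp add: edge_weight_def)

locale degree_two_reattachment =
  fixes n :: nat and E :: "nat set set" and v a c w :: nat
  assumes tree: "is_tree n E"
    and neighbors_v: "neighbors E v = {a, c}" and a_ne_c: "a \<noteq> c"
    and w_lt: "w < n" and w_ne_v: "w \<noteq> v" and w_ne_c: "w \<noteq> c"
begin

abbreviation E0 :: "nat set set" where "E0 \<equiv> E - {{v, a}, {v, c}}"

abbreviation E' :: "nat set set" where "E' \<equiv> reattach E v a c w"

lemma graph: "simple_graph n E"
  using is_treeD(1)[OF tree] .

lemma edge_va: "{v, a} \<in> E" and edge_vc: "{v, c} \<in> E"
  using neighbors_v by (auto simp: neighbors_iff[symmetric])

lemma a_lt: "a < n" and c_lt: "c < n" and v_lt: "v < n"
  and a_ne_v: "a \<noteq> v" and c_ne_v: "c \<noteq> v"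
  using simple_graph_edgeD[OF graph edge_va] simple_graph_edgeD[OF graph edge_vc] by auto

lemma edge_ac_notin: "{a, c} \<notin> E"
  using tree_no_triangle[OF tree edge_va edge_vc a_ne_c] .

lemma edge_at_v: "{v, u} \<in> E \<Longrightarrow> u = a \<or> u = c"
  using neighbors_v by (auto simp: neighbors_iff[symmetric])

lemma deg_v: "deg E v = 2"
  using neighbors_v a_ne_c by (simp add: deg_eq_card_neighbors)

lemma two_le_n: "2 \<le> n"
  using a_lt c_lt a_ne_c by linarith

lemma reattach_eq: "E' = insert {v, w} (insert {a, c} E0)"
  by (simp add: reattach_def)

lemma neighbors_reattach_v: "neighbors E' v = {w}"
proof -
  have "u \<in> neighbors E' v \<longleftrightarrow> u = w" for u
  proof
    assume "u \<in> neighbors E' v"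
    then have "{v, u} = {v, w} \<or> {v, u} = {a, c}
        \<or> ({v, u} \<in> E \<and> {v, u} \<noteq> {v, a} \<and> {v, u} \<noteq> {v, c})"
      by (simp add: neighbors_iff reattach_def)
    then show "u = w"
      using edge_at_v a_ne_v c_ne_v by (auto simp: doubleton_eq_iff)
  qed (simp add: neighbors_iff reattach_def)
  then show ?thesis by blast
qed

lemma neighbors_reattach_w: "neighbors E' w = insert (if w = a then c else v) (neighbors E w)"
proof (cases "w = a")
  case True
  have "{a, v} \<in> E" using edge_va by (simp add: insert_commute)
  then have "{a, u} \<in> E' \<longleftrightarrow> u = c \<or> {a, u} \<in> E" for u
    using a_ne_v c_ne_v True by (auto simp: reattach_def doubleton_eq_iff)
  then show ?thesis using True by (auto simp: neighbors_iff)
next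
  case False
  then have "{w, u} \<in> E' \<longleftrightarrow> u = v \<or> {w, u} \<in> E" for u
    using w_ne_v w_ne_c by (auto simp: reattach_def doubleton_eq_iff)
  then show ?thesis using False by (auto simp: neighbors_iff)
qed

lemma neighbors_reattach_other:
  assumes "x \<noteq> v" "x \<noteq> w"
  shows "neighbors E' x = (if x = a then insert c (neighbors E a - {v})
    else if x = c then insert a (neighbors E c - {v}) else neighbors E x)"
proof -
  have "{x, u} \<in> E' \<longleftrightarrow> (if x = a then u = c \<or> {a, u} \<in> E \<and> u \<noteq> v
    else if x = c then u = a \<or> {c, u} \<in> E \<and> u \<noteq> v else {x, u} \<in> E)" for u
    using assms a_ne_c a_ne_v c_ne_v by (auto simp: reattach_def doubleton_eq_iff)
  then show ?thesis using a_ne_c by (auto simp: neighbors_iff)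
qed

lemma deg_reattach: "deg E' x = (if x = v then 1 else if x = w then deg E x + 1 else deg E x)"
proof -
  consider "x = v" | "x = w" | "x \<noteq> v" "x \<noteq> w" by blast
  then show ?thesis
  proof cases
    case 1
    then show ?thesis using w_ne_v by (simp add: deg_eq_card_neighbors neighbors_reattach_v)
  next
    case 2
    have "(if w = a then c else v) \<notin> neighbors E w"
      using edge_ac_notin edge_at_v[of w] w_ne_c by (auto simp: neighbors_iff insert_commute)
    then show ?thesis
      using 2 w_ne_v finite_neighbors[OF graph]
      by (simp add: deg_eq_card_neighbors neighbors_reattach_w)
  next
    case 3
    have "v \<in> neighbors E a" "v \<in> neighbors E c" "c \<notin> neighbors E a" "a \<notin> neighbors E c"
      using edge_va edge_vc edge_ac_notin by (auto simp: neighbors_iff insert_commute)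
    moreover have "v \<notin> neighbors E x" if "x \<noteq> a" "x \<noteq> c"
      using edge_at_v[of x] that by (auto simp: neighbors_iff insert_commute)
    moreover have "finite (neighbors E a)" "finite (neighbors E c)"
      using finite_neighbors[OF graph] by auto
    ultimately have "card (neighbors E' x) = card (neighbors E x)"
      using 3 c_ne_v a_ne_v a_ne_c
        card_Suc_Diff1[of "neighbors E a" v] card_Suc_Diff1[of "neighbors E c" v]
      by (auto simp: neighbors_reattach_other)
    then show ?thesis using 3 by (simp add: deg_eq_card_neighbors)
  qed
qed

lemma reattach_simple_graph: "simple_graph n E'"
  using graph v_lt w_lt a_lt c_lt w_ne_v a_ne_c unfolding reattach_def by blast

lemma card_reattach: "card E' = card E"
proof -
  have fin: "finite E" using is_treeD(2)[OF tree] .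
  have "{v, w} \<noteq> {a, c}" using a_ne_v c_ne_v by (auto simp: doubleton_eq_iff)
  moreover have "{v, w} \<notin> E0" using edge_at_v[of w] w_ne_c by auto
  moreover have "card E0 = card E - 2"
    using fin edge_va edge_vc a_ne_c by (simp add: card_Diff_subset doubleton_eq_iff)
  moreover have "card E \<ge> 2"
    using card_mono[OF fin, of "{{v, a}, {v, c}}"] edge_va edge_vc a_ne_c
    by (simp add: doubleton_eq_iff)
  ultimately show ?thesis using fin edge_ac_notin by (simp add: reattach_eq)
qed

lemma reattach_reaches_a:
  assumes "(a, z) \<in> (adj E)\<^sup>*" "z \<noteq> v"
  shows "(z, a) \<in> (adj E')\<^sup>*"
  using assms
proof (induction rule: rtrancl_induct)
  case base
  then show ?case by simp
next
  case (step y z)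
  then have yz: "{y, z} \<in> E" by simp
  show ?case
  proof (cases "y = v")
    case True
    have "{c, a} \<in> E'" by (simp add: reattach_def insert_commute)
    moreover have "z = a \<or> z = c" using edge_at_v yz True by simp
    ultimately show ?thesis by auto
  next
    case False
    then have "{z, y} \<in> E'"
      using yz \<open>z \<noteq> v\<close> by (auto simp: reattach_def doubleton_eq_iff insert_commute)
    then have "(z, y) \<in> adj E'" by simp
    then show ?thesis using step.IH[OF False] by (rule converse_rtrancl_into_rtrancl)
  qed
qed

lemma reattach_connected: "\<forall>x<n. \<forall>y<n. (x, y) \<in> (adj E')\<^sup>*"
proof -
  have from_a: "(a, x) \<in> (adj E)\<^sup>*" if "x < n" for x
    using is_treeD(4)[OF tree] a_lt that by blast
  have to_a: "(x, a) \<in> (adj E')\<^sup>*" if "x < n" for x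
  proof (cases "x = v")
    case True
    have "(v, w) \<in> adj E'" by (simp add: reattach_def)
    moreover have "(w, a) \<in> (adj E')\<^sup>*" using reattach_reaches_a from_a w_lt w_ne_v by blast
    ultimately show ?thesis using True by (simp add: converse_rtrancl_into_rtrancl)
  next
    case False
    then show ?thesis using reattach_reaches_a from_a that by blast
  qed
  show ?thesis
  proof (intro allI impI)
    fix x y assume "x < n" "y < n"
    then show "(x, y) \<in> (adj E')\<^sup>*"
      using rtrancl_trans[OF to_a adj_rtrancl_sym[OF to_a]] by blast
  qed
qed

lemma reattach_is_tree: "is_tree n E'"
  unfolding is_tree_def
proof (intro conjI)
  show "\<forall>u<n. \<forall>x<n. (u, x) \<in> {(x, y). {x, y} \<in> E'}\<^sup>*"
    using reattach_connected by (simp add: adj_def)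
qed (use reattach_simple_graph card_reattach is_treeD(3,5)[OF tree] in simp_all)

lemma M1_reattach: "M1 n E' + 2 = M1 n E + 2 * deg E w"
proof -
  have "deg E' x ^ 2 + 3 * of_bool (x = v) = deg E x ^ 2 + (2 * deg E w + 1) * of_bool (x = w)"
    for x
    using deg_v w_ne_v by (simp add: deg_reattach power2_eq_square)
  then have "(\<Sum>x<n. deg E' x ^ 2 + 3 * of_bool (x = v))
      = (\<Sum>x<n. deg E x ^ 2 + (2 * deg E w + 1) * of_bool (x = w))"
    by simp
  then show ?thesis using v_lt w_lt by (simp add: M1_def sum.distrib)
qed

lemma deg_pos: "x < n \<Longrightarrow> deg E x \<ge> 1"
  using tree_deg_pos[OF tree two_le_n] .

lemma sum_edges_split: "sum f E = f {v, a} + f {v, c} + sum f E0"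
proof -
  have "E = insert {v, a} (insert {v, c} E0)" using edge_va edge_vc by blast
  moreover have "{v, a} \<notin> insert {v, c} E0" using a_ne_c by (simp add: doubleton_eq_iff)
  ultimately show ?thesis
    using is_treeD(2)[OF tree]
    by (metis add.assoc finite_Diff sum.insert finite_insert Diff_iff insertCI)
qed

lemma sum_edges_reattach: "sum f E' = f {v, w} + f {a, c} + sum f E0"
proof -
  have "{v, w} \<notin> insert {a, c} E0"
    using a_ne_v c_ne_v edge_at_v[of w] w_ne_c by (auto simp: doubleton_eq_iff)
  moreover have "{a, c} \<notin> E0" using edge_ac_notin by simp
  ultimately show ?thesis using is_treeD(2)[OF tree] by (simp add: reattach_eq add.assoc)
qed

lemma M2_split: "M2 E = 2 * deg E a + 2 * deg E c + sum (edge_weight E) E0"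
  using a_ne_v c_ne_v deg_v
  by (simp add: M2_eq_sum_edge_weight sum_edges_split edge_weight_doubleton)

lemma M2_reattach_split: "M2 E' = deg E w + 1 + deg E' a * deg E c + sum (edge_weight E') E0"
  using a_ne_c c_ne_v w_ne_v w_ne_c
  by (simp add: M2_eq_sum_edge_weight sum_edges_reattach edge_weight_doubleton deg_reattach)

lemma edge_weight_reattach_ge:
  assumes "e \<in> E0"
  shows "edge_weight E e + of_bool (w \<in> e) \<le> edge_weight E' e"
proof -
  have "e \<in> E" using assms by blast
  then obtain p q where e: "e = {p, q}" and pq: "p < n" "q < n" "p \<noteq> q"
    using graph by blast
  have "p \<noteq> v" "q \<noteq> v"
    using assms edge_at_v[of q] edge_at_v[of p] unfolding e by (auto simp: insert_commute)
  then have "deg E' p = deg E p + of_bool (p = w)" "deg E' q = deg E q + of_bool (q = w)"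
    by (simp_all add: deg_reattach)
  then show ?thesis
    using deg_pos[OF pq(1)] deg_pos[OF pq(2)] pq(3)
    by (auto simp: e edge_weight_doubleton algebra_simps)
qed

lemma card_edges_at_w: "card {e \<in> E0. w \<in> e} + of_bool (w = a) = deg E w"
proof -
  let ?I = "{e \<in> E. w \<in> e}"
  have fin: "finite ?I" using is_treeD(2)[OF tree] by simp
  have "{e \<in> E0. w \<in> e} = ?I - {{v, a}}" using w_ne_v w_ne_c by auto
  moreover have "{v, a} \<in> ?I \<longleftrightarrow> w = a" using edge_va w_ne_v by auto
  ultimately show ?thesis
    using card_Suc_Diff1[OF fin, of "{v, a}"] deg_eq_card_incident_edges[OF graph, of w]
    by (cases "w = a") simp_all
qed

lemma M2_reattach_gt:
  assumes w3: "deg E w = 3" and le4: "\<forall>x<n. deg E x \<le> 4"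
  shows "M2 E < M2 E'"
proof -
  let ?k = "card {e \<in> E0. w \<in> e}"
  have "sum (edge_weight E) E0 + ?k = (\<Sum>e\<in>E0. edge_weight E e + of_bool (w \<in> e))"
    using is_treeD(2)[OF tree] by (simp add: sum.distrib Int_def)
  also have "\<dots> \<le> sum (edge_weight E') E0"
    using edge_weight_reattach_ge by (intro sum_mono) auto
  finally have gain: "sum (edge_weight E) E0 + ?k \<le> sum (edge_weight E') E0" .
  have da: "deg E a \<in> {1, 2, 3, 4}" and dc: "deg E c \<in> {1, 2, 3, 4}"
    using deg_pos le4 a_lt c_lt by fastforce+
  show ?thesis
  proof (cases "w = a")
    case True
    then have "deg E' a = 4" "deg E a = 3" "?k = 2"
      using deg_reattach[of w] w3 w_ne_v card_edges_at_w by simp_all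
    then show ?thesis using gain dc M2_split M2_reattach_split True w3 by auto
  next
    case False
    then have "deg E' a * deg E c = deg E a * deg E c" "?k = 3"
      using a_ne_v w3 card_edges_at_w by (simp_all add: deg_reattach)
    moreover have "2 * deg E a + 2 * deg E c < deg E a * deg E c + 7"
      using da dc by auto \<comment> \<open>false for degrees 1 and 5, so the bound 4 is needed here\<close>
    ultimately show ?thesis using gain M2_split M2_reattach_split w3 by linarith
  qed
qed

lemma reattach_in_CT_star:
  assumes w3: "deg E w = 3" and le4: "\<forall>x<n. deg E x \<le> 4"
  shows "E' \<in> CT_star n (num_branching n E)"
proof -
  have "deg E' x \<le> 4 \<and> (2 < deg E' x \<longleftrightarrow> 2 < deg E x)" if "x < n" for x
    using deg_v w3 le4 that by (simp add: deg_reattach)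
  then have "\<forall>x<n. deg E' x \<le> 4" "num_branching n E' = num_branching n E"
    unfolding num_branching_def by (auto intro!: arg_cong[where f = card])
  then show ?thesis using reattach_is_tree by (simp add: CT_star_def chemical_tree_def)
qed

end

lemma chemical_tree_improvable:
  assumes CT: "chemical_tree n E" and v: "v < n" "deg E v = 2" and w: "w < n" "deg E w = 3"
  obtains E' where "E' \<in> CT_star n (num_branching n E)" "M1 n E < M1 n E'" "M2 E < M2 E'"
proof -
  have T: "is_tree n E" and le4: "\<forall>x<n. deg E x \<le> 4"
    using CT unfolding chemical_tree_def by auto
  obtain a0 c0 where ac0: "neighbors E v = {a0, c0}" "a0 \<noteq> c0"
    using v(2) by (auto simp: deg_eq_card_neighbors card_2_iff)
  obtain a c where ac: "neighbors E v = {a, c}" "a \<noteq> c" "w \<noteq> c"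
  proof (cases "w = c0")
    case True
    then show ?thesis using that[of c0 a0] ac0 by (auto simp: insert_commute)
  next
    case False
    then show ?thesis using that[of a0 c0] ac0 by auto
  qed
  interpret degree_two_reattachment n E v a c w
    using T ac w v by unfold_locales auto
  show ?thesis
    using that reattach_in_CT_star[OF w(2) le4] M1_reattach M2_reattach_gt[OF w(2) le4] w(2)
    by simp
qed

theorem lemma9:
  fixes n b :: nat and T :: "nat set set"
  assumes "1 \<le> b" and "real b < real n / 2 - 1"
    and "(T \<in> CT_star n b \<and> (\<forall>T'\<in>CT_star n b. M1 n T' \<le> M1 n T))
         \<or> (T \<in> CT_star n b \<and> (\<forall>T'\<in>CT_star n b. M2 T' \<le> M2 T))"
  shows "n2 n T > 0 \<longleftrightarrow> real b < (real n - 2) / 3"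
proof -
  have CT: "chemical_tree n T" and nb: "num_branching n T = b"
    using assms(3) by (auto simp: CT_star_def)
  have n: "n \<ge> 2" using assms(2) by linarith
  have count: "n + n2 n T + 3 * b = 2 * (n - 1) + card {x. x < n \<and> deg T x = 3}"
    using chemical_tree_degree_count[OF CT n] nb by simp
  have "n2 n T > 0 \<longleftrightarrow> 3 * b + 2 < n"
  proof
    assume n2_pos: "n2 n T > 0"
    show "3 * b + 2 < n"
    proof (rule ccontr)
      assume "\<not> 3 * b + 2 < n"
      then have "card {x. x < n \<and> deg T x = 3} > 0" using count n2_pos by linarith
      then obtain w where "w < n" "deg T w = 3" by (auto simp: card_gt_0_iff)
      moreover obtain v where "v < n" "deg T v = 2"
        using n2_pos by (auto simp: n2_def card_gt_0_iff)
      ultimately obtain T' where "T' \<in> CT_star n b" "M1 n T < M1 n T'" "M2 T < M2 T'"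
        using chemical_tree_improvable[OF CT] nb by metis
      then show False using assms(3) by (auto simp: not_le[symmetric])
    qed
  qed (use count in linarith)
  moreover have "real b < (real n - 2) / 3 \<longleftrightarrow> real (3 * b + 2) < real n"
    by (simp add: field_simps)
  ultimately show ?thesis by (simp only: of_nat_less_iff)
qed

end
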